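(* Let $n$ be a positive odd integer. Then, modulo $(1-aq^n)(a-q^n)$, $$ \sum_{k=0}^{n-1}\frac{(aq;q^2)_k\,(q/a;q^2)_k}{(q^2;q^2)_k^2}\, x^k \equiv (-1)^{(n-1)/2}q^{(1-n^2)/4} \sum_{k=0}^{n-1}\frac{(aq;q^2)_k\,(q/a;q^2)_k}{(q^2;q^2)_k^2}\, q^{2k}\,(x;q^2)_k. $$
   Context: $a,q,x$ are indeterminates. The $q$-shifted factorial is $(y;q)_0=1$ and $(y;q)_m=(1-y)(1-yq)\cdots(1-yq^{m-1})$ for $m\geqslant1$. For rational functions $A,B$ and a polynomial $P$, $A\equiv B\pmod P$ means $A-B=P\cdot C/D$ for polynomials $C,D$ with $D$ coprime to $P$. *)

theory Defs
  imports "HOL-Computational_Algebra.Polynomial" "HOL-Computational_Algebra.Polynomial_Factorial"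
begin

text \<open>Polynomials in three indeterminates a, q, x over the rationals, realised as
  nested univariate polynomials: a is the innermost variable, q the middle one,
  x the outermost one.\<close>

type_synonym mpoly3 = "rat poly poly poly"
type_synonym rfun3 = "mpoly3 fract"

definition var_a :: mpoly3 where "var_a = [:[:[:0, 1:]:]:]"
definition var_q :: mpoly3 where "var_q = [:[:0, 1:]:]"
definition var_x :: mpoly3 where "var_x = [:0, 1:]"

abbreviation A :: rfun3 where "A \<equiv> to_fract var_a"
abbreviation Q :: rfun3 where "Q \<equiv> to_fract var_q"
abbreviation X :: rfun3 where "X \<equiv> to_fract var_x"

definition qpoch :: "'a::comm_ring_1 \<Rightarrow> 'a \<Rightarrow> nat \<Rightarrow> 'a" where
  "qpoch y q m = (\<Prod>j<m. 1 - y * q ^ j)"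

definition rcong :: "rfun3 \<Rightarrow> rfun3 \<Rightarrow> mpoly3 \<Rightarrow> bool" where
  "rcong F G P \<longleftrightarrow> (\<exists>C D. D \<noteq> 0 \<and> coprime D P \<and>
       F - G = to_fract P * to_fract C / to_fract D)"

end

theory Submission
  imports Defs "HOL-Computational_Algebra.Field_as_Ring"
begin

(* Let t_k(a) = (aq;q^2)_k (q/a;q^2)_k / (q^2;q^2)_k^2. As (aq;q^2)_k (q/a;q^2)_k is a polynomial in
   y = a + 1/a, the difference of the two sides is Phi(a + 1/a) for a polynomial Phi whose
   coefficients have denominators dividing powers of D = a q (q^2;q^2)_n.
   At a = q^n, n = 2m + 1, both sums terminate (t_k = 0 for k > m) and the two sides are equal:
   expanding (x;q^2)_k by the q-binomial theorem, the coefficients of x^j on the right satisfy the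
   same first order recurrence in j as t_j (by telescoping) and match t_j at j = m.
   Hence Phi(q^n + q^-n) = 0, so Phi(a + 1/a) is a multiple of
   a + 1/a - q^n - q^-n = -(1 - a q^n)(a - q^n)/(a q^n) by a quotient with a power of D as
   denominator, and D is coprime to (1 - a q^n)(a - q^n). *)

section \<open>The q-binomial expansion of (x;b)_k\<close>

definition qpoch_poly :: "'a::comm_ring_1 \<Rightarrow> nat \<Rightarrow> 'a poly" where
  "qpoch_poly b k = (\<Prod>i<k. [:1, - (b ^ i):])"

lemma poly_qpoch_poly: "poly (qpoch_poly b k) x = qpoch x b k"
  by (simp add: qpoch_poly_def qpoch_def poly_prod mult.commute)

lemma qpoch_poly_Suc: "qpoch_poly b (Suc k) = qpoch_poly b k * [:1, - (b ^ k):]"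
  by (simp add: qpoch_poly_def)

lemma coeff_qpoch_poly_0 [simp]: "coeff (qpoch_poly b k) 0 = 1"
  by (induction k) (simp_all add: qpoch_poly_Suc qpoch_poly_def)

lemma coeff_qpoch_poly_Suc:
  "coeff (qpoch_poly b (Suc k)) (Suc j) = coeff (qpoch_poly b k) (Suc j) - b ^ k * coeff (qpoch_poly b k) j"
  by (simp add: qpoch_poly_Suc algebra_simps)

lemma degree_qpoch_poly: "degree (qpoch_poly b k) \<le> k"
proof (induction k)
  case (Suc k)
  have "degree (qpoch_poly b (Suc k)) \<le> degree (qpoch_poly b k) + degree [:1, - (b ^ k):]"
    unfolding qpoch_poly_Suc by (rule degree_mult_le)
  with Suc show ?case by (simp split: if_splits)
qed (simp add: qpoch_poly_def)

lemma coeff_qpoch_poly_eq_0: "k < j \<Longrightarrow> coeff (qpoch_poly b k) j = 0"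
  using degree_qpoch_poly[of b k] by (simp add: coeff_eq_0)

lemma coeff_qpoch_poly_top: "coeff (qpoch_poly b k) k = (\<Prod>i<k. - (b ^ i))"
  by (induction k) (simp_all add: coeff_qpoch_poly_Suc coeff_qpoch_poly_eq_0)

lemma qpoch_poly_dilate:
  "[:1, -1:] * pcompose (qpoch_poly b k) [:0, b:] = [:1, - (b ^ k):] * qpoch_poly b k"
proof (induction k)
  case (Suc k)
  have "pcompose [:1, - (b ^ k):] [:0, b:] = [:1, - (b ^ Suc k):]"
    by (simp add: pcompose_pCons algebra_simps)
  then have "[:1, -1:] * pcompose (qpoch_poly b (Suc k)) [:0, b:]
      = ([:1, -1:] * pcompose (qpoch_poly b k) [:0, b:]) * [:1, - (b ^ Suc k):]"
    by (simp only: qpoch_poly_Suc pcompose_mult mult.assoc)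
  also have "\<dots> = [:1, - (b ^ Suc k):] * qpoch_poly b (Suc k)"
    by (simp only: Suc qpoch_poly_Suc ac_simps)
  finally show ?case .
qed (simp add: qpoch_poly_def one_pCons pcompose_pCons)

lemma coeff_qpoch_poly_ratio:
  "coeff (qpoch_poly b k) (Suc j) * (1 - b ^ Suc j) = (b ^ k - b ^ j) * coeff (qpoch_poly b k) j"
proof -
  have "coeff ([:1, -1:] * pcompose (qpoch_poly b k) [:0, b:]) (Suc j)
      = coeff ([:1, - (b ^ k):] * qpoch_poly b k) (Suc j)"
    by (simp only: qpoch_poly_dilate)
  then show ?thesis
    by (simp add: coeff_pcompose_linear algebra_simps)
qed

lemma coeff_qpoch_poly_Suc_ratio:
  "coeff (qpoch_poly b (Suc k)) j * (b ^ j - b ^ Suc k) = b ^ j * (1 - b ^ Suc k) * coeff (qpoch_poly b k) j"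
proof (cases j)
  case (Suc i)
  define c where "c = coeff (qpoch_poly b k)"
  have "(c (Suc i) - b ^ k * c i) * (b ^ Suc i - b ^ Suc k)
      = c (Suc i) * (b ^ Suc i - b ^ Suc k) + b ^ Suc k * ((b ^ k - b ^ i) * c i)"
    by (simp add: algebra_simps)
  also have "\<dots> = c (Suc i) * (b ^ Suc i - b ^ Suc k) + b ^ Suc k * (c (Suc i) * (1 - b ^ Suc i))"
    by (simp only: c_def coeff_qpoch_poly_ratio)
  also have "\<dots> = b ^ Suc i * (1 - b ^ Suc k) * c (Suc i)"
    by (simp add: algebra_simps)
  finally show ?thesis
    unfolding Suc coeff_qpoch_poly_Suc c_def .
qed (simp add: algebra_simps)

section \<open>The terminating case a = q^n\<close>

lemma qpoch_poly_coeff_sum_recurrence: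
  fixes t :: "nat \<Rightarrow> 'a::comm_ring_1"
  assumes \<alpha>\<beta>: "\<alpha> * \<beta> = b"
    and t_rec: "\<And>k. t (Suc k) * (1 - b ^ Suc k)\<^sup>2 = t k * ((1 - \<alpha> * b ^ k) * (1 - \<beta> * b ^ k))"
    and t_N: "t N = 0"
  defines "g \<equiv> \<lambda>j. \<Sum>k<N. t k * b ^ k * coeff (qpoch_poly b k) j"
  shows "g (Suc j) * (1 - b ^ Suc j)\<^sup>2 = g j * ((1 - \<alpha> * b ^ j) * (1 - \<beta> * b ^ j))"
proof -
  define c where "c k i = coeff (qpoch_poly b k) i" for k i
  (* the defect of the recurrence in the k-th summand telescopes with this certificate *)
  define G where "G k = t k * c k j * (1 - b ^ k) * (b ^ k - b ^ j)" for k
  have step: "t k * b ^ k * c k (Suc j) * (1 - b ^ Suc j)\<^sup>2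
      - t k * b ^ k * c k j * ((1 - \<alpha> * b ^ j) * (1 - \<beta> * b ^ j)) = G (Suc k) - G k" for k
  proof -
    have "G (Suc k) = - (t (Suc k) * (1 - b ^ Suc k)) * (c (Suc k) j * (b ^ j - b ^ Suc k))"
      by (simp add: G_def algebra_simps)
    also have "\<dots> = - (t (Suc k) * (1 - b ^ Suc k)\<^sup>2) * b ^ j * c k j"
      unfolding c_def coeff_qpoch_poly_Suc_ratio by (simp add: power2_eq_square algebra_simps)
    also have "\<dots> = - (t k * ((1 - \<alpha> * b ^ k) * (1 - \<beta> * b ^ k))) * b ^ j * c k j"
      by (simp only: t_rec)
    finally have G_Suc: "G (Suc k) = \<dots>" .
    have ring_id: "T * B * (1 - b * w) * ((B - w) * C) - T * B * C * ((1 - \<alpha> * w) * (1 - \<beta> * w))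
        = - (T * ((1 - \<alpha> * B) * (1 - \<beta> * B))) * w * C - T * C * (1 - B) * (B - w)" for T B C w
      unfolding \<alpha>\<beta>[symmetric] by (simp add: algebra_simps)
    have "t k * b ^ k * c k (Suc j) * (1 - b ^ Suc j)\<^sup>2
        = t k * b ^ k * (1 - b ^ Suc j) * (c k (Suc j) * (1 - b ^ Suc j))"
      by (simp add: power2_eq_square algebra_simps)
    also have "\<dots> = t k * b ^ k * (1 - b * b ^ j) * ((b ^ k - b ^ j) * c k j)"
      unfolding c_def coeff_qpoch_poly_ratio by simp
    finally show ?thesis
      unfolding G_Suc by (simp add: ring_id G_def)
  qed
  have "g (Suc j) * (1 - b ^ Suc j)\<^sup>2 - g j * ((1 - \<alpha> * b ^ j) * (1 - \<beta> * b ^ j))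
      = (\<Sum>k<N. G (Suc k) - G k)"
    unfolding g_def sum_distrib_right sum_subtractf[symmetric] c_def[symmetric]
    by (intro sum.cong refl step)
  also have "\<dots> = 0"
    by (simp only: sum_lessThan_telescope) (simp add: G_def t_N)
  finally show ?thesis by simp
qed

lemma eq_by_backward_recurrence:
  fixes u v :: "nat \<Rightarrow> 'a::idom"
  assumes u: "\<And>i. i < m \<Longrightarrow> u (Suc i) * c i = u i * d i"
    and v: "\<And>i. i < m \<Longrightarrow> v (Suc i) * c i = v i * d i"
    and d: "\<And>i. i < m \<Longrightarrow> d i \<noteq> 0"
    and "u m = v m" and "j \<le> m"
  shows "u j = v j"
  using \<open>j \<le> m\<close>
proof (induction j rule: inc_induct)
  case (step i)
  then have "u i * d i = v i * d i"
    using u[of i] v[of i] by metis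
  with d[OF \<open>i < m\<close>] show ?case by simp
qed (fact \<open>u m = v m\<close>)

lemma power_mult_prod_uminus_power:
  "b ^ m * (\<Prod>i<m. - (b ^ i)) = (-1) ^ m * b ^ (m * (m + 1) div 2)" for b :: "'a::comm_ring_1"
proof (induction m)
  case (Suc m)
  have "b ^ Suc m * (\<Prod>i<Suc m. - (b ^ i)) = - (b * b ^ m) * (b ^ m * (\<Prod>i<m. - (b ^ i)))"
    by (simp add: ac_simps)
  also have "\<dots> = (-1) ^ Suc m * b ^ (m * (m + 1) div 2 + Suc m)"
    by (simp add: Suc power_add ac_simps)
  also have "m * (m + 1) div 2 + Suc m = Suc m * (Suc m + 1) div 2"
    by simp
  finally show ?case .
qed simp

lemma qpoch_Suc: "qpoch y q (Suc k) = qpoch y q k * (1 - y * q ^ k)"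
  by (simp add: qpoch_def)

definition qhyp_coeff :: "'a::field \<Rightarrow> 'a \<Rightarrow> 'a \<Rightarrow> nat \<Rightarrow> 'a" where
  "qhyp_coeff \<alpha> \<beta> b k = qpoch \<alpha> b k * qpoch \<beta> b k / (qpoch b b k)\<^sup>2"

lemma qhyp_coeff_Suc:
  assumes "\<And>i. 0 < i \<Longrightarrow> b ^ i \<noteq> 1"
  shows "qhyp_coeff \<alpha> \<beta> b (Suc k) * (1 - b ^ Suc k)\<^sup>2
    = qhyp_coeff \<alpha> \<beta> b k * ((1 - \<alpha> * b ^ k) * (1 - \<beta> * b ^ k))"
proof -
  have "1 - b ^ Suc k \<noteq> 0"
    using assms[of "Suc k"] by simp
  then show ?thesis
    by (simp add: qhyp_coeff_def qpoch_Suc power_mult_distrib)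
qed

lemma qhyp_coeff_eq_0:
  assumes "b \<noteq> 0" "m < k"
  shows "qhyp_coeff \<alpha> (inverse (b ^ m)) b k = 0"
proof -
  have "qpoch (inverse (b ^ m)) b k = 0"
    unfolding qpoch_def using assms by (auto intro!: bexI[of _ m])
  then show ?thesis by (simp add: qhyp_coeff_def)
qed

lemma qhyp_rec_factor_neq_0:
  fixes b :: "'a::field"
  assumes "b \<noteq> 0" "\<And>i. 0 < i \<Longrightarrow> b ^ i \<noteq> 1" "i < m"
  shows "(1 - b ^ Suc m * b ^ i) * (1 - inverse (b ^ m) * b ^ i) \<noteq> 0"
proof -
  have "b ^ Suc m * b ^ i \<noteq> 1"
    using assms(2)[of "Suc m + i"] by (simp add: power_add mult.assoc)
  moreover have "b ^ m = b ^ i * b ^ (m - i)"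
    using assms(3) by (simp flip: power_add)
  then have "inverse (b ^ m) * b ^ i \<noteq> 1"
    using assms by (auto simp: field_simps)
  ultimately show ?thesis
    by simp
qed

lemma qhyp_coeff_expansion:
  fixes b :: "'a::field"
  assumes b: "b \<noteq> 0" "\<And>i. 0 < i \<Longrightarrow> b ^ i \<noteq> 1" and "m < N"
  defines "t \<equiv> qhyp_coeff (b ^ Suc m) (inverse (b ^ m)) b"
  shows "(-1) ^ m * b ^ (m * (m + 1) div 2) * t j = (\<Sum>k<N. t k * b ^ k * coeff (qpoch_poly b k) j)"
proof -
  define c where "c = (-1) ^ m * b ^ (m * (m + 1) div 2)"
  define g where "g j = (\<Sum>k<N. t k * b ^ k * coeff (qpoch_poly b k) j)" for j
  define d where "d i = (1 - b ^ Suc m * b ^ i) * (1 - inverse (b ^ m) * b ^ i)" for i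
  have t_rec: "t (Suc i) * (1 - b ^ Suc i)\<^sup>2 = t i * d i" for i
    unfolding t_def d_def by (rule qhyp_coeff_Suc[OF b(2)])
  have t_0: "t k = 0" if "m < k" for k
    using that b(1) by (simp add: t_def qhyp_coeff_eq_0)
  have g_rec: "g (Suc i) * (1 - b ^ Suc i)\<^sup>2 = g i * d i" for i
    unfolding g_def d_def using b(1) t_rec[unfolded d_def] t_0[OF \<open>m < N\<close>]
    by (intro qpoch_poly_coeff_sum_recurrence) simp_all
  have g_0: "g j = 0" if "m < j" for j
  proof -
    have "t k * b ^ k * coeff (qpoch_poly b k) j = 0" for k
      using that t_0[of k] coeff_qpoch_poly_eq_0[of k j b] by (cases "k < j") auto
    then show ?thesis
      unfolding g_def by (intro sum.neutral) blast
  qed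
  have "g m = (\<Sum>k<N. if k = m then t m * b ^ m * coeff (qpoch_poly b m) m else 0)"
    unfolding g_def by (rule sum.cong) (use t_0 coeff_qpoch_poly_eq_0 in \<open>auto simp: neq_iff\<close>)
  then have g_m: "g m = c * t m"
    using \<open>m < N\<close> by (simp add: c_def coeff_qpoch_poly_top power_mult_prod_uminus_power mult.assoc)
  show ?thesis
  proof (cases "m < j")
    case True
    then show ?thesis
      using g_0[of j] by (simp add: t_0 g_def)
  next
    case False
    have "c * t j = g j"
    proof (rule eq_by_backward_recurrence[where u = "\<lambda>j. c * t j" and v = g and m = m])
      show "c * t (Suc i) * (1 - b ^ Suc i)\<^sup>2 = c * t i * d i" for i
        by (simp only: t_rec mult.assoc)
      show "d i \<noteq> 0" if "i < m" for i
        unfolding d_def using b that by (rule qhyp_rec_factor_neq_0)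
    qed (use False g_rec g_m in simp_all)
    then show ?thesis
      by (simp add: c_def g_def)
  qed
qed

lemma qhyp_sum_transform:
  fixes b x :: "'a::field"
  assumes b: "b \<noteq> 0" "\<And>i. 0 < i \<Longrightarrow> b ^ i \<noteq> 1" and "m < N"
  defines "t \<equiv> qhyp_coeff (b ^ Suc m) (inverse (b ^ m)) b"
  shows "(-1) ^ m * b ^ (m * (m + 1) div 2) * (\<Sum>k<N. t k * x ^ k)
    = (\<Sum>k<N. t k * b ^ k * qpoch x b k)"
proof -
  define c where "c = (-1) ^ m * b ^ (m * (m + 1) div 2)"
  have "coeff (\<Sum>k<N. monom (t k) k) j = t j" for j
    using \<open>m < N\<close> b(1) by (auto simp: coeff_sum t_def qhyp_coeff_eq_0)
  then have "smult c (\<Sum>k<N. monom (t k) k) = (\<Sum>k<N. smult (t k * b ^ k) (qpoch_poly b k))"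
    using qhyp_coeff_expansion[OF b \<open>m < N\<close>] by (intro poly_eqI) (simp add: c_def coeff_sum t_def)
  then have "c * poly (\<Sum>k<N. monom (t k) k) x = poly (\<Sum>k<N. smult (t k * b ^ k) (qpoch_poly b k)) x"
    by (metis poly_smult)
  then show ?thesis
    by (simp add: c_def poly_sum poly_monom poly_qpoch_poly)
qed

lemma qhyp_sum_transform_odd:
  fixes q x :: "'a::field"
  assumes q: "q \<noteq> 0" "\<And>i. 0 < i \<Longrightarrow> q ^ i \<noteq> 1" and n: "n = 2 * m + 1"
  shows "(\<Sum>k<n. qhyp_coeff (q ^ n * q) (q / q ^ n) (q\<^sup>2) k * x ^ k)
    = (-1) ^ m * inverse (q ^ (m * (m + 1)))
      * (\<Sum>k<n. qhyp_coeff (q ^ n * q) (q / q ^ n) (q\<^sup>2) k * q ^ (2 * k) * qpoch x (q\<^sup>2) k)"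
proof -
  have q2: "q\<^sup>2 \<noteq> 0" "\<And>i. 0 < i \<Longrightarrow> (q\<^sup>2) ^ i \<noteq> 1"
    using q(1) q(2)[of "2 * _"] by (simp_all add: power_mult)
  have square_power: "(q\<^sup>2) ^ k = q ^ (2 * k)" for k
    by (simp add: power_mult)
  have "2 * (m * (m + 1) div 2) = m * (m + 1)"
    by simp
  then have powers: "q ^ (2 * Suc m) = q ^ n * q" "inverse (q ^ (2 * m)) = q / q ^ n"
    "q ^ (2 * (m * (m + 1) div 2)) = q ^ (m * (m + 1))"
    using q(1) by (simp_all add: n power_add inverse_eq_divide)
  have "m < n"
    by (simp add: n)
  let ?L = "\<Sum>k<n. qhyp_coeff (q ^ n * q) (q / q ^ n) (q\<^sup>2) k * x ^ k"
  let ?R = "\<Sum>k<n. qhyp_coeff (q ^ n * q) (q / q ^ n) (q\<^sup>2) k * q ^ (2 * k) * qpoch x (q\<^sup>2) k"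
  have R: "?R = (-1) ^ m * q ^ (m * (m + 1)) * ?L"
    using qhyp_sum_transform[OF q2 \<open>m < n\<close>, of x] unfolding square_power powers by simp
  have "(-1) ^ m * (-1) ^ m = (1::'a)"
    by (simp flip: power_add)
  then have "(-1) ^ m * inverse (q ^ (m * (m + 1))) * ((-1) ^ m * q ^ (m * (m + 1))) = 1"
    using q(1) by (simp add: field_simps)
  then have "?L = (-1) ^ m * inverse (q ^ (m * (m + 1))) * ((-1) ^ m * q ^ (m * (m + 1))) * ?L"
    by simp
  then show ?thesis
    unfolding R by (simp only: mult.assoc)
qed

section \<open>Localization at the powers of a polynomial\<close>

lemma to_fract_power [simp]: "to_fract (x ^ k) = to_fract x ^ k"
  by (induction k) simp_all

lemma to_fract_prod: "to_fract (\<Prod>i\<in>S. f i) = (\<Prod>i\<in>S. to_fract (f i))"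
  by (induction S rule: infinite_finite_induct) simp_all

definition in_localization :: "'a::idom \<Rightarrow> 'a fract \<Rightarrow> bool" where
  "in_localization D z \<longleftrightarrow> (\<exists>r k. z * to_fract D ^ k = to_fract r)"

lemma in_localization_to_fract [intro]: "in_localization D (to_fract r)"
  unfolding in_localization_def by (rule exI[of _ r], rule exI[of _ 0]) simp

lemma in_localization_0 [simp, intro]: "in_localization D 0"
  and in_localization_1 [simp, intro]: "in_localization D 1"
  using in_localization_to_fract[of D 0] in_localization_to_fract[of D 1] by simp_all

lemma in_localization_add [intro]:
  assumes "in_localization D x" "in_localization D y"
  shows "in_localization D (x + y)"
proof -
  obtain r k s l where x: "x * to_fract D ^ k = to_fract r" and y: "y * to_fract D ^ l = to_fract s"
    using assms unfolding in_localization_def by blast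
  have "(x + y) * to_fract D ^ (k + l)
      = (x * to_fract D ^ k) * to_fract D ^ l + (y * to_fract D ^ l) * to_fract D ^ k"
    by (simp add: power_add algebra_simps)
  also have "\<dots> = to_fract (r * D ^ l + s * D ^ k)"
    by (simp add: x y)
  finally have "(x + y) * to_fract D ^ (k + l) = to_fract (r * D ^ l + s * D ^ k)" .
  then show ?thesis
    unfolding in_localization_def by blast
qed

lemma in_localization_mult [intro]:
  assumes "in_localization D x" "in_localization D y"
  shows "in_localization D (x * y)"
proof -
  obtain r k s l where "x * to_fract D ^ k = to_fract r" "y * to_fract D ^ l = to_fract s"
    using assms unfolding in_localization_def by blast
  then have "(x * y) * to_fract D ^ (k + l) = to_fract (r * s)"
    by (simp add: power_add) (metis mult.assoc mult.left_commute)
  then show ?thesis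
    unfolding in_localization_def by blast
qed

lemma in_localization_uminus [intro]: "in_localization D x \<Longrightarrow> in_localization D (- x)"
  unfolding in_localization_def by (metis mult_minus_left to_fract_uminus)

lemma in_localization_diff [intro]:
  "in_localization D x \<Longrightarrow> in_localization D y \<Longrightarrow> in_localization D (x - y)"
  unfolding diff_conv_add_uminus by blast

lemma in_localization_power [intro]: "in_localization D x \<Longrightarrow> in_localization D (x ^ k)"
  by (induction k) auto

lemma in_localization_sum [intro]:
  "(\<And>i. i \<in> S \<Longrightarrow> in_localization D (f i)) \<Longrightarrow> in_localization D (\<Sum>i\<in>S. f i)"
  by (induction S rule: infinite_finite_induct) auto

lemma in_localization_prod [intro]:
  "(\<And>i. i \<in> S \<Longrightarrow> in_localization D (f i)) \<Longrightarrow> in_localization D (\<Prod>i\<in>S. f i)"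
  by (induction S rule: infinite_finite_induct) auto

lemma in_localization_inverse:
  assumes "u dvd D" "D \<noteq> 0"
  shows "in_localization D (inverse (to_fract u))"
proof -
  obtain w where w: "D = u * w"
    using assms(1) by blast
  with assms(2) have "inverse (to_fract u) * to_fract D ^ 1 = to_fract w"
    by simp
  then show ?thesis
    unfolding in_localization_def by blast
qed

definition poly_in_localization :: "'a::idom \<Rightarrow> 'a fract poly \<Rightarrow> bool" where
  "poly_in_localization D p \<longleftrightarrow> (\<forall>i. in_localization D (coeff p i))"

lemma in_localization_poly [intro]:
  "poly_in_localization D p \<Longrightarrow> in_localization D z \<Longrightarrow> in_localization D (poly p z)"
  unfolding poly_altdef poly_in_localization_def by blast

lemma poly_in_localization_pCons [intro]:
  "in_localization D a \<Longrightarrow> poly_in_localization D p \<Longrightarrow> poly_in_localization D (pCons a p)"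
  unfolding poly_in_localization_def by (simp add: coeff_pCons split: nat.split)

lemma poly_in_localization_0 [simp]: "poly_in_localization D 0"
  by (simp add: poly_in_localization_def)

lemma poly_in_localization_1 [simp]: "poly_in_localization D 1"
  by (simp add: poly_in_localization_def)

lemma poly_in_localization_mult [intro]:
  "poly_in_localization D p \<Longrightarrow> poly_in_localization D q \<Longrightarrow> poly_in_localization D (p * q)"
  unfolding poly_in_localization_def coeff_mult by blast

lemma poly_in_localization_prod [intro]:
  "(\<And>i. i \<in> S \<Longrightarrow> poly_in_localization D (f i)) \<Longrightarrow> poly_in_localization D (\<Prod>i\<in>S. f i)"
  by (induction S rule: infinite_finite_induct) auto

lemma poly_in_localization_sum [intro]:
  "(\<And>i. i \<in> S \<Longrightarrow> poly_in_localization D (f i)) \<Longrightarrow> poly_in_localization D (\<Sum>i\<in>S. f i)"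
  unfolding poly_in_localization_def coeff_sum by blast

lemma poly_in_localization_smult [intro]:
  "in_localization D c \<Longrightarrow> poly_in_localization D p \<Longrightarrow> poly_in_localization D (smult c p)"
  unfolding poly_in_localization_def by auto

lemma poly_in_localization_synthetic_div [intro]:
  "poly_in_localization D p \<Longrightarrow> in_localization D c \<Longrightarrow> poly_in_localization D (synthetic_div p c)"
proof (induction p rule: pCons_induct)
  case (pCons a p)
  then have "poly_in_localization D p"
    unfolding poly_in_localization_def by (metis coeff_pCons_Suc)
  with pCons show ?case
    by auto
qed simp

lemma poly_root_factor_in_localization:
  assumes "poly_in_localization D p" "in_localization D y" "in_localization D z" "poly p z = 0"
  obtains h where "in_localization D h" "poly p y = (y - z) * h"
proof
  have "poly p y = poly ([:- z, 1:] * synthetic_div p z + [:poly p z:]) y"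
    by (simp only: synthetic_div_correct')
  then show "poly p y = (y - z) * poly (synthetic_div p z) y"
    using assms(4) by (simp add: algebra_simps)
qed (use assms in auto)

lemma rcong_if_diff_in_localization:
  assumes "D \<noteq> 0" "coprime D P" "in_localization D z" "F - G = to_fract P * z"
  shows "rcong F G P"
proof -
  obtain r k where "z * to_fract D ^ k = to_fract r"
    using assms(3) unfolding in_localization_def by blast
  with assms(1) have "z = to_fract r / to_fract (D ^ k)"
    by (simp add: eq_divide_eq)
  then show ?thesis
    unfolding rcong_def using assms
    by (intro exI[of _ r] exI[of _ "D ^ k"]) simp
qed

section \<open>Coprimality with (1 - a q^n)(a - q^n)\<close>

lemma coprime_if_lincomb_eq_1: "u * a + v * b = 1 \<Longrightarrow> coprime a b"
  by (rule coprimeI) (metis dvd_add dvd_mult)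

lemma diff_dvd_power_diff: "x - y dvd x ^ N - y ^ N" for x y :: "'a::comm_ring_1"
  unfolding power_diff_sumr2 by simp

lemma is_unit_if_dvd_const_and_unit_coeff:
  fixes c :: "'a::{idom_divide, algebraic_semidom} poly poly"
  assumes "c dvd [:[:s:]:]" "s \<noteq> 0" "c dvd p" "is_unit (coeff (coeff p i) j)"
  shows "is_unit c"
proof -
  have "degree c = 0"
    using dvd_imp_degree_le[OF assms(1)] assms(2) by simp
  then obtain c1 where c1: "c = [:c1:]"
    by (metis degree_0_id)
  have "degree c1 = 0"
    using assms(1,2) dvd_imp_degree_le[of c1 "[:s:]"] by (simp add: c1)
  then obtain c0 where c0: "c1 = [:c0:]"
    by (metis degree_0_id)
  have "c0 dvd coeff (coeff p i) j"
    using assms(3) unfolding c1 c0 const_poly_dvd_iff by simp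
  with assms(4) have "is_unit c0"
    using dvd_unit_imp_unit by blast
  then show ?thesis
    by (simp add: c1 c0 is_unit_const_poly_iff)
qed

lemma var_q_power: "var_q ^ k = [:monom 1 k:]"
  by (simp add: var_q_def poly_const_pow monom_altdef)

lemma var_a_power: "var_a ^ k = [:[:[:0, 1:] ^ k:]:]"
  by (simp add: var_a_def poly_const_pow)

lemma var_q_power_neq_1: "0 < i \<Longrightarrow> var_q ^ i \<noteq> 1"
  unfolding var_q_power one_pCons[where 'a = "rat poly poly"] by (simp add: monom_eq_1_iff)

lemma Q_neq_0: "Q \<noteq> 0"
  by (simp add: var_q_def)

lemma A_neq_0: "A \<noteq> 0"
  by (simp add: var_a_def)

lemma Q_power_neq_1: "0 < i \<Longrightarrow> Q ^ i \<noteq> 1"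
  using var_q_power_neq_1 by (metis to_fract_1 to_fract_eq_iff to_fract_power)

lemma var_a_power_minus_1:
  assumes "0 < N"
  shows "var_a ^ N - 1 = [:[:[:0, 1:] ^ N - 1:]:]" and "[:0, 1:] ^ N - 1 \<noteq> (0 :: rat poly)"
proof -
  show "var_a ^ N - 1 = [:[:[:0, 1:] ^ N - 1:]:]"
    by (simp add: var_a_power one_pCons)
  have "poly ([:0, 1:] ^ N - 1) 0 \<noteq> (0 :: rat)"
    using assms by (simp add: power_0_left)
  then show "[:0, 1:] ^ N - 1 \<noteq> (0 :: rat poly)"
    by (metis poly_0)
qed

lemma coeff_coeff_one_minus_var_a_var_q_power: "0 < n \<Longrightarrow> coeff (coeff (1 - var_a * var_q ^ n) 0) 0 = 1"
  by (simp add: var_q_power var_a_def)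

lemma coeff_coeff_var_a_minus_var_q_power: "0 < n \<Longrightarrow> coeff (coeff (var_a - var_q ^ n) 0) n = -1"
  unfolding var_q_power var_a_def by (cases n) simp_all

lemma coprime_var_a:
  "coprime var_a ((1 - var_a * var_q ^ n) * (var_a - var_q ^ n))"
proof -
  have "coprime var_a (1 - var_a * var_q ^ n)"
    by (rule coprime_if_lincomb_eq_1[of "var_q ^ n" _ 1]) (simp add: algebra_simps)
  moreover have "coprime var_a (var_a - var_q ^ n)"
  proof (rule coprimeI)
    fix c assume c: "c dvd var_a" "c dvd var_a - var_q ^ n"
    then have "c dvd var_a - (var_a - var_q ^ n)"
      by (rule dvd_diff)
    then have "c dvd var_q ^ n"
      by simp
    moreover have "is_unit (coeff (coeff (var_q ^ n) 0) n)"
      by (simp add: var_q_power)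
    moreover have "c dvd [:[:[:0, 1:]:]:]"
      using c(1) by (simp add: var_a_def)
    ultimately show "is_unit c"
      using is_unit_if_dvd_const_and_unit_coeff[of c "[:0, 1:]"] by auto
  qed
  ultimately show ?thesis by simp
qed

lemma coprime_var_q:
  assumes "0 < n"
  shows "coprime var_q ((1 - var_a * var_q ^ n) * (var_a - var_q ^ n))"
proof -
  have q_n: "var_q ^ n = var_q * var_q ^ (n - 1)"
    using assms by (simp flip: power_Suc)
  have "coprime var_q (1 - var_a * var_q ^ n)"
    by (rule coprime_if_lincomb_eq_1[of "var_a * var_q ^ (n - 1)" _ 1]) (simp add: q_n algebra_simps)
  moreover have "coprime var_q (var_a - var_q ^ n)"
  proof (rule coprimeI)
    fix c assume c: "c dvd var_q" "c dvd var_a - var_q ^ n"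
    then have "c dvd (var_a - var_q ^ n) + var_q * var_q ^ (n - 1)"
      by simp
    then have "c dvd [:[:[:0, 1:]:]:]"
      by (simp add: q_n var_a_def)
    moreover have "is_unit (coeff (coeff var_q 0) 1)"
      by (simp add: var_q_def)
    ultimately show "is_unit c"
      using is_unit_if_dvd_const_and_unit_coeff[of c "[:0, 1:]"] c(1) by auto
  qed
  ultimately show ?thesis by simp
qed

lemma coprime_one_minus_var_q_power:
  assumes "0 < n" "0 < N"
  shows "coprime (1 - var_q ^ N) ((1 - var_a * var_q ^ n) * (var_a - var_q ^ n))"
proof -
  have "(var_q ^ N) ^ n = (var_q ^ n) ^ N"
    by (simp flip: power_mult add: mult.commute)
  then have q_N: "1 - var_q ^ N dvd 1 - (var_q ^ n) ^ N"
    using diff_dvd_power_diff[of 1 "var_q ^ N" n] by simp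
  note a_N = var_a_power_minus_1[OF assms(2)]
  have "coprime (1 - var_q ^ N) (1 - var_a * var_q ^ n)"
  proof (rule coprimeI)
    fix c assume c: "c dvd 1 - var_q ^ N" "c dvd 1 - var_a * var_q ^ n"
    have "c dvd 1 - (var_q ^ n) ^ N"
      using c(1) q_N by (rule dvd_trans)
    moreover have "c dvd 1 - (var_a * var_q ^ n) ^ N"
      using c(2) diff_dvd_power_diff[of 1 "var_a * var_q ^ n" N] by (simp add: dvd_trans)
    ultimately have "c dvd var_a ^ N * (1 - (var_q ^ n) ^ N) - (1 - (var_a * var_q ^ n) ^ N)"
      by (rule dvd_diff[OF dvd_mult])
    then have "c dvd [:[:[:0, 1:] ^ N - 1:]:]"
      by (simp add: algebra_simps flip: a_N(1))
    moreover have "is_unit (coeff (coeff (1 - var_a * var_q ^ n) 0) 0)"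
      using coeff_coeff_one_minus_var_a_var_q_power[OF assms(1)] by simp
    ultimately show "is_unit c"
      using is_unit_if_dvd_const_and_unit_coeff a_N(2) c(2) by blast
  qed
  moreover have "coprime (1 - var_q ^ N) (var_a - var_q ^ n)"
  proof (rule coprimeI)
    fix c assume c: "c dvd 1 - var_q ^ N" "c dvd var_a - var_q ^ n"
    have "c dvd var_a ^ N - (var_q ^ n) ^ N"
      using c(2) diff_dvd_power_diff by (rule dvd_trans)
    moreover have "c dvd 1 - (var_q ^ n) ^ N"
      using c(1) q_N by (rule dvd_trans)
    ultimately have "c dvd (var_a ^ N - (var_q ^ n) ^ N) - (1 - (var_q ^ n) ^ N)"
      by (rule dvd_diff)
    then have "c dvd [:[:[:0, 1:] ^ N - 1:]:]"
      by (simp flip: a_N(1))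
    moreover have "is_unit (coeff (coeff (var_a - var_q ^ n) 0) n)"
      using coeff_coeff_var_a_minus_var_q_power[OF assms(1)] by simp
    ultimately show "is_unit c"
      using is_unit_if_dvd_const_and_unit_coeff a_N(2) c(2) by blast
  qed
  ultimately show ?thesis by simp
qed

(* all denominators of the two sums: a, q and (q^2;q^2)_k for k \<le> n *)
definition common_denom :: "nat \<Rightarrow> mpoly3" where
  "common_denom n = var_a * var_q * (\<Prod>j<n. 1 - var_q ^ (2 * Suc j))"

lemma common_denom_neq_0: "common_denom n \<noteq> 0"
  using var_q_power_neq_1[of "2 * Suc _"] by (simp add: common_denom_def var_a_def var_q_def)

lemma coprime_common_denom:
  assumes "0 < n"
  shows "coprime (common_denom n) ((1 - var_a * var_q ^ n) * (var_a - var_q ^ n))"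
proof -
  have "coprime (\<Prod>j<n. 1 - var_q ^ (2 * Suc j)) ((1 - var_a * var_q ^ n) * (var_a - var_q ^ n))"
    by (rule prod_coprime_left, rule coprime_one_minus_var_q_power[OF assms]) simp
  then show ?thesis
    using coprime_var_a coprime_var_q[OF assms] by (simp add: common_denom_def)
qed

lemma in_localization_common_denom:
  shows "in_localization (common_denom n) (inverse A)"
    and "in_localization (common_denom n) (inverse Q)"
    and "k \<le> n \<Longrightarrow> in_localization (common_denom n) (inverse (qpoch (Q\<^sup>2) (Q\<^sup>2) k))"
proof -
  show "in_localization (common_denom n) (inverse A)" "in_localization (common_denom n) (inverse Q)"
    by (intro in_localization_inverse common_denom_neq_0; simp add: common_denom_def)+
  assume "k \<le> n"
  have "qpoch (Q\<^sup>2) (Q\<^sup>2) k = to_fract (\<Prod>j<k. 1 - var_q ^ (2 * Suc j))"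
    unfolding qpoch_def to_fract_prod
    by (simp only: to_fract_diff to_fract_1 to_fract_mult to_fract_power power_mult power_Suc)
  moreover have "(\<Prod>j<k. 1 - var_q ^ (2 * Suc j)) dvd common_denom n"
    unfolding common_denom_def using \<open>k \<le> n\<close> by (intro dvd_mult prod_dvd_prod_subset) auto
  ultimately show "in_localization (common_denom n) (inverse (qpoch (Q\<^sup>2) (Q\<^sup>2) k))"
    by (simp add: in_localization_inverse common_denom_neq_0)
qed

definition qpoch_pair_poly :: "'a::field \<Rightarrow> 'a \<Rightarrow> nat \<Rightarrow> 'a poly" where
  "qpoch_pair_poly u b k = (\<Prod>j<k. [:1 + (u * b ^ j)\<^sup>2, - (u * b ^ j):])"

lemma poly_qpoch_pair_poly:
  assumes "a \<noteq> 0"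
  shows "poly (qpoch_pair_poly u b k) (a + inverse a) = qpoch (a * u) b k * qpoch (u / a) b k"
  unfolding qpoch_pair_poly_def qpoch_def poly_prod prod.distrib[symmetric]
  by (rule prod.cong[OF refl]) (use assms in \<open>simp add: field_simps power2_eq_square\<close>)

definition x_power_sum :: "nat \<Rightarrow> rfun3 \<Rightarrow> rfun3" where
  "x_power_sum n a = (\<Sum>k<n. qhyp_coeff (a * Q) (Q / a) (Q\<^sup>2) k * X ^ k)"

definition x_qpoch_sum :: "nat \<Rightarrow> rfun3 \<Rightarrow> rfun3" where
  "x_qpoch_sum n a = (\<Sum>k<n. qhyp_coeff (a * Q) (Q / a) (Q\<^sup>2) k * Q ^ (2 * k) * qpoch X (Q\<^sup>2) k)"

lemma x_power_sum_at_Q_power: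
  assumes "n = 2 * m + 1"
  shows "x_power_sum n (Q ^ n) = (-1) ^ m * inverse (Q ^ (m * (m + 1))) * x_qpoch_sum n (Q ^ n)"
  unfolding x_power_sum_def x_qpoch_sum_def
  using qhyp_sum_transform_odd[OF Q_neq_0 Q_power_neq_1 assms] by simp

lemma x_sum_diff_poly:
  assumes "in_localization (common_denom n) c"
  obtains \<Phi> where "poly_in_localization (common_denom n) \<Phi>"
    and "\<And>a. a \<noteq> 0 \<Longrightarrow> poly \<Phi> (a + inverse a) = x_power_sum n a - c * x_qpoch_sum n a"
proof
  define d where
    "d k = inverse (qpoch (Q\<^sup>2) (Q\<^sup>2) k) ^ 2 * (X ^ k - c * (Q ^ (2 * k) * qpoch X (Q\<^sup>2) k))" for k
  have "in_localization (common_denom n) (qpoch X (Q\<^sup>2) k)" for k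
    unfolding qpoch_def by blast
  moreover have "in_localization (common_denom n) (inverse (qpoch (Q\<^sup>2) (Q\<^sup>2) k))" if "k < n" for k
    using that by (simp add: in_localization_common_denom)
  ultimately show "poly_in_localization (common_denom n) (\<Sum>k<n. smult (d k) (qpoch_pair_poly Q (Q\<^sup>2) k))"
    unfolding d_def qpoch_pair_poly_def using assms by force
  show "poly (\<Sum>k<n. smult (d k) (qpoch_pair_poly Q (Q\<^sup>2) k)) (a + inverse a)
      = x_power_sum n a - c * x_qpoch_sum n a" if "a \<noteq> 0" for a
    using that
    by (simp add: poly_sum poly_qpoch_pair_poly x_power_sum_def x_qpoch_sum_def qhyp_coeff_def d_def
        sum_distrib_left sum_subtractf[symmetric] divide_inverse power_inverse algebra_simps)
qed

lemma rcong_x_sums_if_eq_at_Q_power: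
  assumes "0 < n" "in_localization (common_denom n) c"
    and "x_power_sum n (Q ^ n) = c * x_qpoch_sum n (Q ^ n)"
  shows "rcong (x_power_sum n A) (c * x_qpoch_sum n A) ((1 - var_a * var_q ^ n) * (var_a - var_q ^ n))"
proof -
  obtain \<Phi> where \<Phi>: "poly_in_localization (common_denom n) \<Phi>"
    and \<Phi>_eval: "\<And>a. a \<noteq> 0 \<Longrightarrow> poly \<Phi> (a + inverse a) = x_power_sum n a - c * x_qpoch_sum n a"
    using x_sum_diff_poly[OF assms(2)] by blast
  have root: "poly \<Phi> (Q ^ n + inverse (Q ^ n)) = 0"
    using \<Phi>_eval[of "Q ^ n"] assms(3) Q_neq_0 by simp
  have "in_localization (common_denom n) (A + inverse A)"
    and "in_localization (common_denom n) (Q ^ n + inverse (Q ^ n))"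
    unfolding power_inverse[symmetric] using in_localization_common_denom by blast+
  then obtain h where h: "in_localization (common_denom n) h"
    and factor: "poly \<Phi> (A + inverse A) = (A + inverse A - (Q ^ n + inverse (Q ^ n))) * h"
    using poly_root_factor_in_localization[OF \<Phi> _ _ root] by blast
  have "A + inverse A - (Q ^ n + inverse (Q ^ n))
      = to_fract ((1 - var_a * var_q ^ n) * (var_a - var_q ^ n)) * - (inverse A * inverse Q ^ n)"
    using A_neq_0 Q_neq_0 by (simp add: field_simps)
  then have "x_power_sum n A - c * x_qpoch_sum n A
      = to_fract ((1 - var_a * var_q ^ n) * (var_a - var_q ^ n)) * (- (inverse A * inverse Q ^ n) * h)"
    using \<Phi>_eval[OF A_neq_0] factor by (simp only: mult.assoc)
  moreover have "in_localization (common_denom n) (- (inverse A * inverse Q ^ n) * h)"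
    using h in_localization_common_denom by blast
  ultimately show ?thesis
    using rcong_if_diff_in_localization[OF common_denom_neq_0 coprime_common_denom[OF assms(1)]] by blast
qed

theorem theorem4p2:
  fixes n :: nat
  assumes "odd n"
  shows "rcong
    (\<Sum>k<n. qpoch (A * Q) (Q^2) k * qpoch (Q / A) (Q^2) k / (qpoch (Q^2) (Q^2) k)^2 * X ^ k)
    ((-1) ^ ((n - 1) div 2) * Q powi ((1 - int n ^ 2) div 4) *
     (\<Sum>k<n. qpoch (A * Q) (Q^2) k * qpoch (Q / A) (Q^2) k / (qpoch (Q^2) (Q^2) k)^2
              * Q ^ (2 * k) * qpoch X (Q^2) k))
    ((1 - var_a * var_q ^ n) * (var_a - var_q ^ n))"
proof -
  obtain m where n: "n = 2 * m + 1"
    using assms oddE by blast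
  define \<epsilon> :: rfun3 where "\<epsilon> = (-1) ^ m * inverse (Q ^ (m * (m + 1)))"
  have exponents: "(n - 1) div 2 = m" "(1 - int n ^ 2) div 4 = - int (m * (m + 1))"
    by (simp_all add: n power2_eq_square algebra_simps)
  have sign: "(-1) ^ ((n - 1) div 2) * Q powi ((1 - int n ^ 2) div 4) = \<epsilon>"
    unfolding exponents power_int_minus power_int_of_nat \<epsilon>_def ..
  have "in_localization (common_denom n) \<epsilon>"
    unfolding \<epsilon>_def power_inverse[symmetric] using in_localization_common_denom by blast
  moreover have "x_power_sum n (Q ^ n) = \<epsilon> * x_qpoch_sum n (Q ^ n)"
    unfolding \<epsilon>_def by (rule x_power_sum_at_Q_power[OF n])
  ultimately have "rcong (x_power_sum n A) (\<epsilon> * x_qpoch_sum n A) ((1 - var_a * var_q ^ n) * (var_a - var_q ^ n))"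
    by (rule rcong_x_sums_if_eq_at_Q_power[rotated]) (simp add: n)
  then show ?thesis
    unfolding sign by (simp only: x_power_sum_def x_qpoch_sum_def qhyp_coeff_def)
qed

end
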